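(* Let $\lambda$ be a composition of $n\ge 2$. For each $1\le k\le n$ and each $\sigma\in\Omega_\lambda$, almost surely $$\sigma_{\tilde U_\lambda}\big(\xi_1(\sigma),\dots,\xi_k(\sigma)\big)=\sigma_{\downarrow k}.$$ In particular, if $\sigma_\lambda$ is uniform on $\Omega_\lambda$, the random permutations $(\sigma_\lambda)_{\downarrow k}$ and $\sigma_{\tilde U_\lambda}(\xi^\lambda_1,\dots,\xi^\lambda_k)$ have the same law.
   Context: A composition $\lambda=(\lambda_1,\dots,\lambda_r)$ of $n$ has descent set $D_\lambda=\{\lambda_1,\lambda_1+\lambda_2,\dots,\lambda_1+\dots+\lambda_{r-1}\}$. $\Omega_\lambda=\{\sigma\in\mathfrak{S}_n: des(\sigma)=D_\lambda\}$ where $des(\sigma)=\{i:\sigma(i+1)<\sigma(i)\}$ (permutations written as words). For $\sigma\in\mathfrak{S}_n$, $\sigma_{\downarrow k}\in\mathfrak{S}_k$ is the word obtained by erasing the letters $k+1,\dots,n$. Peaks/valleys: $i\in[1,n]$ is a peak if $i\in D_\lambda\cup\{n\}$ and $i-1\notin D_\lambda$; a valley if $i\notin D_\lambda$ and $i-1\in D_\lambda\cup\{0\}$. Let $1=a_1<a_2<\dots<a_{t+1}=n$ be the peaks and valleys. The slope $\mathfrak{s}(i)=[x(i),y(i)]$ of a cell $i$ is the maximal integer subinterval of $[1,n]$ containing $i$ and no peak or valley other than $i$ itself. Averaged coordinates: given $\sigma\in\Omega_\lambda$, let $\xi_1(\sigma),\dots,\xi_n(\sigma)$ be independent, with $\xi_i(\sigma)$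 uniform on $[\frac{x(\sigma^{-1}(i))-1}{n},\frac{y(\sigma^{-1}(i))}{n}]$. With $\sigma_\lambda$ uniform on $\Omega_\lambda$, $\xi^\lambda_i=\xi_i(\sigma_\lambda)$ (the uniform variables drawn independently of $\sigma_\lambda$). Run paintbox: $\tilde U_\lambda=(\tilde U_\uparrow(\lambda),\tilde U_\downarrow(\lambda))$ with $\tilde U_\uparrow(\lambda)=\bigcup_{a_i\text{ valley}}]\frac{a_i-1}{n},\frac{a_{i+1}-1}{n}[$, $\tilde U_\downarrow(\lambda)=\bigcup_{a_i\text{ peak}}]\frac{a_i-1}{n},\frac{a_{i+1}-1}{n}[$, with the convention $a_{i+1}=n+1$ when $a_i=n$. Paintbox: for a pair $U=(U_\uparrow,U_\downarrow)$ of disjoint open subsets of $]0,1[$ and $x_1,\dots,x_k\in[0,1]$, $\sigma_U(x_1,\dots,x_k)\in\mathfrak{S}_k$ is defined by $\sigma^{-1}(i)<\sigma^{-1}(j)$ iff ($x_i,x_j$ not in a common component of $U_\uparrow$ or of $U_\downarrow$ and $x_i<x_j$) or (same component of $U_\uparrow$ and $i<j$) or (same component of $U_\downarrow$ and $j<i$). *)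

theory Defs
  imports "HOL-Probability.Probability"
begin

definition comp_descents :: "nat list \<Rightarrow> nat set" where
  "comp_descents lam = {sum_list (take j lam) | j. 1 \<le> j \<and> j < length lam}"

text \<open>Permutations of [1..n] are words (lists) w; w(i) = w ! (i-1).
  Position (inverse permutation), 1-based.\<close>
definition pos :: "nat list \<Rightarrow> nat \<Rightarrow> nat" where
  "pos w v = Suc (LEAST j. j < length w \<and> w ! j = v)"

definition perm_word :: "nat \<Rightarrow> nat list \<Rightarrow> bool" where
  "perm_word n w \<longleftrightarrow> distinct w \<and> set w = {1..n}"

definition des :: "nat list \<Rightarrow> nat set" where
  "des w = {i. 1 \<le> i \<and> i < length w \<and> w ! i < w ! (i - 1)}"

definition Omega :: "nat \<Rightarrow> nat list \<Rightarrow> nat list set" where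
  "Omega n lam = {w. perm_word n w \<and> des w = comp_descents lam}"

definition restr :: "nat \<Rightarrow> nat list \<Rightarrow> nat list" where
  "restr k w = filter (\<lambda>x. x \<le> k) w"

definition is_peak :: "nat set \<Rightarrow> nat \<Rightarrow> nat \<Rightarrow> bool" where
  "is_peak D n i \<longleftrightarrow> 1 \<le> i \<and> i \<le> n \<and> i \<in> D \<union> {n} \<and> (i - 1) \<notin> D"

definition is_valley :: "nat set \<Rightarrow> nat \<Rightarrow> nat \<Rightarrow> bool" where
  "is_valley D n i \<longleftrightarrow> 1 \<le> i \<and> i \<le> n \<and> i \<notin> D \<and> (i - 1) \<in> D \<union> {0}"

definition PV :: "nat set \<Rightarrow> nat \<Rightarrow> nat set" where
  "PV D n = {i. is_peak D n i \<or> is_valley D n i}"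

definition slope_x :: "nat set \<Rightarrow> nat \<Rightarrow> nat \<Rightarrow> nat" where
  "slope_x D n i = Min {x. 1 \<le> x \<and> x \<le> i \<and> (\<forall>j\<in>{x..i}. j \<in> PV D n \<longrightarrow> j = i)}"

definition slope_y :: "nat set \<Rightarrow> nat \<Rightarrow> nat \<Rightarrow> nat" where
  "slope_y D n i = Max {y. i \<le> y \<and> y \<le> n \<and> (\<forall>j\<in>{i..y}. j \<in> PV D n \<longrightarrow> j = i)}"

text \<open>Joint law of (xi_1(sigma),...,xi_k(sigma)): independent uniforms.\<close>
definition xi_measure :: "nat \<Rightarrow> nat list \<Rightarrow> nat list \<Rightarrow> nat \<Rightarrow> (nat \<Rightarrow> real) measure" where
  "xi_measure n lam w k =
     PiM {1..k} (\<lambda>i. uniform_measure lborel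
        {(real (slope_x (comp_descents lam) n (pos w i)) - 1) / real n ..
          real (slope_y (comp_descents lam) n (pos w i)) / real n})"

definition same_comp :: "real set \<Rightarrow> real \<Rightarrow> real \<Rightarrow> bool" where
  "same_comp S a b \<longleftrightarrow> connected_component S a b"

definition pb_before :: "real set \<times> real set \<Rightarrow> (nat \<Rightarrow> real) \<Rightarrow> nat \<Rightarrow> nat \<Rightarrow> bool" where
  "pb_before U x i j \<longleftrightarrow>
     (\<not> same_comp (fst U) (x i) (x j) \<and> \<not> same_comp (snd U) (x i) (x j) \<and> x i < x j)
     \<or> (same_comp (fst U) (x i) (x j) \<and> i < j)
     \<or> (same_comp (snd U) (x i) (x j) \<and> j < i)"

definition paintbox :: "real set \<times> real set \<Rightarrow> nat \<Rightarrow> (nat \<Rightarrow> real) \<Rightarrow> nat list" where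
  "paintbox U k x = (THE w. perm_word k w \<and>
      (\<forall>i\<in>{1..k}. \<forall>j\<in>{1..k}. pos w i < pos w j \<longleftrightarrow> pb_before U x i j))"

definition next_pv :: "nat set \<Rightarrow> nat \<Rightarrow> nat \<Rightarrow> nat" where
  "next_pv D n a = (if a = n then n + 1 else Min {b \<in> PV D n. a < b})"

definition run_paintbox :: "nat list \<Rightarrow> nat \<Rightarrow> real set \<times> real set" where
  "run_paintbox lam n =
    (let D = comp_descents lam in
     (\<Union>a\<in>{a. is_valley D n a}. {(real a - 1) / real n <..< (real (next_pv D n a) - 1) / real n},
      \<Union>a\<in>{a. is_peak D n a}. {(real a - 1) / real n <..< (real (next_pv D n a) - 1) / real n}))"

end

theory Submission
  imports Defs
begin

text \<open>Between two consecutive peaks or valleys of the descent pattern of \<open>\<lambda>\<close> (a run), every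
  \<open>\<sigma> \<in> \<Omega>\<^sub>\<lambda>\<close> increases after a valley and decreases after a peak. Almost surely no
  \<open>\<xi>\<^sub>i(\<sigma>)\<close> lies on the grid \<open>{m/n}\<close>, so it lies in an open cell \<open>](c-1)/n, c/n[\<close> of
  the slope of \<open>\<sigma>\<^sup>-\<^sup>1(i)\<close>, and that cell lies in the run interval of a run whose closure
  contains the position \<open>\<sigma>\<^sup>-\<^sup>1(i)\<close>. Letters in different runs are therefore ordered in the same
  way by position and by \<open>\<xi>\<close>. Letters in the same run lie in one component of
  \<open>\<tilde>U\<^sub>\<up>\<close> (resp. \<open>\<tilde>U\<^sub>\<down>\<close>), where the paintbox orders them increasingly
  (resp. decreasingly) by value, just as \<open>\<sigma>\<close> does on an ascending (descending) run. Hence the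
  paintbox returns \<open>\<sigma>\<^sub>\<down>\<^sub>k\<close> almost surely, and averaging over \<open>\<sigma>\<close> gives the equality of laws.\<close>

lemma pos_nth:
  assumes "distinct ys" "t < length ys"
  shows "pos ys (ys ! t) = Suc t"
proof -
  have "(LEAST j. j < length ys \<and> ys ! j = ys ! t) = t"
    by (rule Least_equality) (use assms in \<open>auto simp: nth_eq_iff_index_eq\<close>)
  then show ?thesis by (simp add: pos_def)
qed

lemma pos_in_set:
  assumes "distinct ys" "i \<in> set ys"
  shows "1 \<le> pos ys i" "pos ys i \<le> length ys" "ys ! (pos ys i - 1) = i"
  using assms pos_nth by (auto simp: in_set_conv_nth)

lemma inj_on_pos: "distinct ys \<Longrightarrow> inj_on (pos ys) (set ys)"
  by (metis inj_onI pos_in_set(3))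

lemma sorted_wrt_pos: "distinct ys \<Longrightarrow> sorted_wrt (\<lambda>a b. pos ys a < pos ys b) ys"
  by (auto simp: sorted_wrt_iff_nth_less pos_nth)

lemma pos_less_iff_sorted_wrt:
  assumes "distinct ys" "sorted_wrt R ys" "asymp R" "i \<in> set ys" "j \<in> set ys"
  shows "pos ys i < pos ys j \<longleftrightarrow> R i j"
proof -
  obtain a b where ab: "a < length ys" "ys ! a = i" "b < length ys" "ys ! b = j"
    using assms(4,5) by (auto simp: in_set_conv_nth)
  have R: "R (ys ! x) (ys ! y)" if "x < y" "y < length ys" for x y
    using assms(2) that by (auto simp: sorted_wrt_iff_nth_less)
  have pos: "pos ys i = Suc a" "pos ys j = Suc b"
    using ab pos_nth[OF assms(1)] by auto
  show ?thesis
  proof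
    assume "pos ys i < pos ys j"
    then show "R i j" using R[of a b] ab pos by simp
  next
    assume "R i j"
    moreover have "\<not> R i j" if "b \<le> a"
      using that R[of b a] ab asympD[OF assms(3)] irreflp_on_if_asymp_on[OF assms(3)]
      by (cases "a = b") (auto simp: irreflp_on_def)
    ultimately show "pos ys i < pos ys j" using pos by fastforce
  qed
qed

lemma perm_word_eq_if_same_order:
  assumes "perm_word k w1" "perm_word k w2"
    and "\<forall>i\<in>{1..k}. \<forall>j\<in>{1..k}. pos w1 i < pos w1 j \<longleftrightarrow> pos w2 i < pos w2 j"
  shows "w1 = w2"
proof -
  have w1: "distinct w1" "set w1 = {1..k}" and w2: "distinct w2" "set w2 = {1..k}"
    using assms(1,2) by (auto simp: perm_word_def)
  have inj: "inj_on (pos w2) {1..k}"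
    using inj_on_pos[OF w2(1)] w2(2) by simp
  have "sorted_wrt (\<lambda>a b. pos w2 a < pos w2 b) w1"
    using sorted_wrt_pos[OF w1(1)] assms(3) w1(2) nth_mem[of _ w1]
    by (simp add: sorted_wrt_iff_nth_less)
  then have "sorted (map (pos w2) w1)" "distinct (map (pos w2) w1)"
    using inj w1 by (auto simp: sorted_wrt_map distinct_map elim!: sorted_wrt_mono_rel[rotated])
  moreover have "sorted (map (pos w2) w2)" "distinct (map (pos w2) w2)"
    using sorted_wrt_pos[OF w2(1)] inj w2
    by (auto simp: sorted_wrt_map distinct_map elim!: sorted_wrt_mono_rel[rotated])
  ultimately have "map (pos w2) w1 = map (pos w2) w2"
    using w1 w2 by (intro sorted_distinct_set_unique) auto
  then show ?thesis using inj w1 w2 by (simp add: inj_on_map_eq_map)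
qed

lemma perm_word_restr: "perm_word n w \<Longrightarrow> k \<le> n \<Longrightarrow> perm_word k (restr k w)"
  by (auto simp: perm_word_def restr_def)

lemma pos_restr_less_iff:
  assumes "perm_word n w" "k \<le> n" "i \<in> {1..k}" "j \<in> {1..k}"
  shows "pos (restr k w) i < pos (restr k w) j \<longleftrightarrow> pos w i < pos w j"
proof -
  have w: "distinct w" "set w = {1..n}" using assms(1) by (auto simp: perm_word_def)
  have "sorted_wrt (\<lambda>a b. pos w a < pos w b) (restr k w)"
    unfolding restr_def by (rule sorted_wrt_filter[OF sorted_wrt_pos[OF w(1)]])
  from pos_less_iff_sorted_wrt[OF _ this] show ?thesis
    using w assms(2-4) by (auto simp: restr_def asymp_on_def)
qed

lemma des_append:
  "des (xs @ ys) = des xs \<union> (if xs \<noteq> [] \<and> ys \<noteq> [] \<and> hd ys < last xs then {length xs} else {})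
     \<union> (+) (length xs) ` des ys" (is "_ = ?R")
proof (intro set_eqI)
  fix i
  consider "i < length xs" | "i = length xs" | d where "i = length xs + d" "1 \<le> d"
    by (metis less_imp_add_positive linorder_neqE_nat One_nat_def Suc_leI)
  then show "i \<in> des (xs @ ys) \<longleftrightarrow> i \<in> ?R"
  proof cases
    case 1
    then show ?thesis by (auto simp: des_def nth_append)
  next
    case 2
    then show ?thesis by (cases xs rule: rev_cases; cases ys) (auto simp: des_def nth_append)
  next
    case 3
    then show ?thesis by (auto simp: des_def nth_append)
  qed
qed

lemma des_upt: "des [a..<b] = {}"
  by (auto simp: des_def)

lemma comp_descents_eq_image: "comp_descents l = (\<lambda>j. sum_list (take j l)) ` {1..<length l}"
  by (auto simp: comp_descents_def)

lemma comp_descents_Nil [simp]: "comp_descents [] = {}"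
  by (simp add: comp_descents_def)

lemma comp_descents_Cons:
  "comp_descents (a # l) = (if l = [] then {} else insert a ((+) a ` comp_descents l))"
proof -
  have shift: "{1..<length (a # l)} = Suc ` {0..<length l}"
    by simp
  have "comp_descents (a # l) = (\<lambda>j. a + sum_list (take j l)) ` {0..<length l}"
    unfolding comp_descents_eq_image shift image_image by simp
  moreover have "{0..<length l} = (if l = [] then {} else insert 0 {1..<length l})"
    by auto
  ultimately show ?thesis by (auto simp: comp_descents_eq_image image_image)
qed

text \<open>\<open>block_word \<lambda>\<close> lists the \<open>\<lambda>\<^sub>1\<close> largest letters increasingly, then the next
  \<open>\<lambda>\<^sub>2\<close> largest, and so on; it witnesses \<open>\<Omega>\<^sub>\<lambda> \<noteq> {}\<close>, without which
  \<open>pmf_of_set \<Omega>\<^sub>\<lambda>\<close> is unspecified.\<close>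
fun block_word :: "nat list \<Rightarrow> nat list" where
  "block_word [] = []"
| "block_word (a # l) = [sum_list l + 1 ..< sum_list l + a + 1] @ block_word l"

lemma perm_word_block_word: "perm_word (sum_list l) (block_word l)"
proof (induction l)
  case (Cons a l)
  then have "distinct (block_word l)" "set (block_word l) = {1..sum_list l}"
    by (simp_all add: perm_word_def)
  moreover have "{sum_list l + 1..<sum_list l + a + 1} \<union> {1..sum_list l} = {1..sum_list (a # l)}"
    by auto
  ultimately show ?case by (auto simp: perm_word_def simp del: upt_Suc)
qed (simp add: perm_word_def)

lemma des_block_word: "\<forall>p\<in>set l. 0 < p \<Longrightarrow> des (block_word l) = comp_descents l"
proof (induction l)
  case Nil
  then show ?case by (simp add: des_def)
next
  case (Cons a l)
  define xs where "xs = [sum_list l + 1 ..< sum_list l + a + 1]"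
  have xs: "xs \<noteq> []" "length xs = a" "last xs = sum_list l + a"
    using Cons.prems by (auto simp: xs_def)
  have "des xs = {}" unfolding xs_def by (rule des_upt)
  have ys: "set (block_word l) = {1..sum_list l}"
    using perm_word_block_word[of l] by (simp add: perm_word_def)
  have ys_Nil: "block_word l = [] \<longleftrightarrow> l = []"
    using ys Cons.prems by (cases l) auto
  have "hd (block_word l) < last xs" if "l \<noteq> []"
    using hd_in_set ys_Nil that ys xs(3) Cons.prems by fastforce
  then have "des (xs @ block_word l) = (if l = [] then {} else {a}) \<union> (+) a ` comp_descents l"
    using Cons xs \<open>des xs = {}\<close> ys_Nil by (simp add: des_append)
  moreover have "block_word (a # l) = xs @ block_word l" by (simp add: xs_def)
  ultimately show ?case by (simp add: comp_descents_Cons)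
qed

lemma monotone_on_atLeastAtMost_SucI:
  fixes f :: "nat \<Rightarrow> 'a"
  assumes "transp R" and succ: "\<And>m. a \<le> m \<Longrightarrow> m < b \<Longrightarrow> R (f m) (f (Suc m))"
  shows "monotone_on {a..b} (<) R f"
proof (rule monotone_onI)
  fix p q assume p: "p \<in> {a..b}" and q: "q \<in> {a..b}" and "p < q"
  then have "Suc p \<le> q" by simp
  then show "R (f p) (f q)" using q
  proof (induction q rule: dec_induct)
    case base then show ?case using p succ by auto
  next
    case (step m)
    then show ?case using p succ[of m] transpD[OF assms(1)] by auto
  qed
qed

lemma monotone_on_less_iff:
  fixes f :: "'a::linorder \<Rightarrow> 'b"
  assumes "monotone_on S (<) R f" "asymp R" "p \<in> S" "q \<in> S" "p \<noteq> q"
  shows "R (f p) (f q) \<longleftrightarrow> p < q"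
  using assms by (metis asympD linorder_neqE monotone_onD)

lemma exists_open_cell_off_grid:
  fixes y :: real and n s t :: nat
  assumes "0 < n" "1 \<le> s" "(real s - 1) / real n \<le> y" "y \<le> real t / real n"
    and "y \<notin> (\<lambda>m. real m / real n) ` {0..t}"
  shows "\<exists>c\<in>{s..t}. real c - 1 < real n * y \<and> real n * y < real c"
proof -
  have y: "real s - 1 \<le> real n * y" "real n * y \<le> real t"
    using assms(1,3,4) by (simp_all add: field_simps)
  define c where "c = nat \<lceil>real n * y\<rceil>"
  have c: "real c - 1 < real n * y" "real n * y \<le> real c"
    using y assms(2) unfolding c_def by linarith+
  moreover have "real n * y \<noteq> real c"
  proof
    assume "real n * y = real c"
    then have "y = real c / real n" "c \<le> t" using assms(1) y(2) by (simp_all add: field_simps)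
    then show False using assms(5) by auto
  qed
  ultimately have "real n * y < real c" by simp
  moreover have "s \<le> c" "c \<le> t" using c y \<open>real n * y < real c\<close> by linarith+
  ultimately show ?thesis using c by auto
qed

lemma open_connected_component_pairs:
  fixes S :: "'a::real_normed_vector set"
  assumes "open S"
  shows "open {p. connected_component S (fst p) (snd p)}"
proof -
  have "{p. connected_component S (fst p) (snd p)} =
        (\<Union>u\<in>S. connected_component_set S u \<times> connected_component_set S u)"
  proof (intro equalityI subsetI)
    fix p assume "p \<in> {p. connected_component S (fst p) (snd p)}"
    then have "fst p \<in> S" "connected_component S (fst p) (fst p)"
      "connected_component S (fst p) (snd p)"
      by (auto intro: connected_component_refl dest: connected_component_in)
    then show "p \<in> (\<Union>u\<in>S. connected_component_set S u \<times> connected_component_set S u)"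
      by (intro UN_I[of "fst p"]) (auto simp: mem_Times_iff)
  next
    fix p assume "p \<in> (\<Union>u\<in>S. connected_component_set S u \<times> connected_component_set S u)"
    then obtain u where "connected_component S u (fst p)" "connected_component S u (snd p)"
      by (auto simp: mem_Times_iff)
    then show "p \<in> {p. connected_component S (fst p) (snd p)}"
      using connected_component_sym connected_component_trans by blast
  qed
  then show ?thesis
    using open_connected_component[OF assms] by (auto intro!: open_UN open_Times)
qed

lemma measurable_same_comp:
  assumes "open S" "f \<in> borel_measurable M" "g \<in> borel_measurable M"
  shows "Measurable.pred M (\<lambda>x. same_comp S (f x) (g x))"
proof -
  have "(\<lambda>x. (f x, g x)) \<in> borel_measurable M"
    using measurable_Pair[OF assms(2,3)] by (simp add: borel_prod)
  from pred_sets2[OF borel_open[OF open_connected_component_pairs[OF assms(1)]] this]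
  show ?thesis by (simp add: same_comp_def)
qed

lemma measurable_pb_before:
  assumes "open (fst U)" "open (snd U)"
    and "(\<lambda>x. x i) \<in> borel_measurable M" "(\<lambda>x. x j) \<in> borel_measurable M"
  shows "Measurable.pred M (\<lambda>x. pb_before U x i j)"
  using measurable_same_comp[OF assms(1,3,4)] measurable_same_comp[OF assms(2,3,4)] assms(3,4)
  unfolding pb_before_def by measurable

definition perm_of_order :: "nat \<Rightarrow> (nat \<times> nat) set \<Rightarrow> nat list" where
  "perm_of_order k R =
     (THE w. perm_word k w \<and> (\<forall>i\<in>{1..k}. \<forall>j\<in>{1..k}. pos w i < pos w j \<longleftrightarrow> (i, j) \<in> R))"

lemma paintbox_eq_perm_of_order:
  "paintbox U k x = perm_of_order k {(i, j) \<in> {1..k} \<times> {1..k}. pb_before U x i j}"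
  unfolding paintbox_def perm_of_order_def by simp

text \<open>The paintbox depends on \<open>x\<close> only through the finitely many events \<open>pb_before U x i j\<close>.\<close>
lemma sets_paintbox_eq:
  assumes "open (fst U)" "open (snd U)"
    and "\<And>i. i \<in> {1..k} \<Longrightarrow> (\<lambda>x. x i) \<in> borel_measurable M"
  shows "{x \<in> space M. paintbox U k x = \<tau>} \<in> sets M"
proof -
  let ?F = "{1..k} \<times> {1..k}"
  have "paintbox U k x = \<tau> \<longleftrightarrow>
      (\<exists>R\<in>{R \<in> Pow ?F. perm_of_order k R = \<tau>}. \<forall>(i, j)\<in>?F. (i, j) \<in> R \<longleftrightarrow> pb_before U x i j)" for x
  proof -
    have "(\<forall>(i, j)\<in>?F. (i, j) \<in> R \<longleftrightarrow> pb_before U x i j) \<longleftrightarrow>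
        R = {(i, j) \<in> ?F. pb_before U x i j}" if "R \<subseteq> ?F" for R
      using that by auto
    then show ?thesis
      unfolding paintbox_eq_perm_of_order by (auto intro!: bexI[of _ "{(i, j) \<in> ?F. pb_before U x i j}"])
  qed
  moreover have "Measurable.pred M (\<lambda>x. pb_before U x i j)" if "(i, j) \<in> ?F" for i j
    using that by (intro measurable_pb_before assms) auto
  then have "Measurable.pred M (\<lambda>x. \<exists>R\<in>{R \<in> Pow ?F. perm_of_order k R = \<tau>}.
      \<forall>(i, j)\<in>?F. (i, j) \<in> R \<longleftrightarrow> pb_before U x i j)"
    by (intro pred_intros_finite) auto
  ultimately show ?thesis by (simp add: pred_def)
qed

locale composition =
  fixes lam :: "nat list" and n :: nat
  assumes parts_pos: "\<forall>p\<in>set lam. 0 < p" and sum_parts: "sum_list lam = n" and two_le_n: "2 \<le> n"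
begin

abbreviation "D \<equiv> comp_descents lam"
abbreviation "P \<equiv> PV D n"
abbreviation "nx \<equiv> next_pv D n"

lemma descent_bounds: "d \<in> D \<Longrightarrow> 1 \<le> d \<and> d < n"
proof -
  assume "d \<in> D"
  then obtain j where j: "1 \<le> j" "j < length lam" "d = sum_list (take j lam)"
    by (auto simp: comp_descents_def)
  have pos_sum: "0 < sum_list xs" if "xs \<noteq> []" "\<forall>p\<in>set xs. 0 < p" for xs :: "nat list"
    using that by (cases xs) auto
  have "0 < sum_list (take j lam)" "0 < sum_list (drop j lam)"
    using j parts_pos by (auto intro!: pos_sum dest: in_set_takeD in_set_dropD)
  moreover have "sum_list (take j lam) + sum_list (drop j lam) = n"
    using sum_parts by (metis append_take_drop_id sum_list_append)
  ultimately show ?thesis using j by auto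
qed

lemma PV_bounds: "a \<in> P \<Longrightarrow> 1 \<le> a \<and> a \<le> n"
  by (auto simp: PV_def is_peak_def is_valley_def)

lemma finite_PV: "finite P"
  by (rule finite_subset[of _ "{1..n}"]) (auto dest: PV_bounds)

lemma one_in_PV: "1 \<in> P"
  using two_le_n descent_bounds[of 0] by (cases "1 \<in> D") (auto simp: PV_def is_peak_def is_valley_def)

lemma n_in_PV: "n \<in> P"
  using two_le_n descent_bounds[of n] by (cases "n - 1 \<in> D") (auto simp: PV_def is_peak_def is_valley_def)

lemma not_peak_and_valley: "\<not> (is_peak D n a \<and> is_valley D n a)"
  using two_le_n by (auto simp: is_peak_def is_valley_def)

lemma next_pv:
  assumes "a \<in> P"
  shows next_pv_gt: "a < nx a" and next_pv_cases: "nx a \<in> P \<or> nx a = n + 1"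
    and next_pv_least: "\<And>b. b \<in> P \<Longrightarrow> a < b \<Longrightarrow> nx a \<le> b"
proof -
  let ?S = "{b \<in> P. a < b}"
  have "finite ?S" using finite_PV by simp
  moreover have "a \<noteq> n \<Longrightarrow> ?S \<noteq> {}" using n_in_PV PV_bounds[OF assms] by force
  ultimately have "a \<noteq> n \<Longrightarrow> nx a \<in> ?S \<and> (\<forall>b\<in>?S. nx a \<le> b)"
    using Min_in[of ?S] Min_le[of ?S] by (simp add: next_pv_def)
  then show "a < nx a" "nx a \<in> P \<or> nx a = n + 1" "\<And>b. b \<in> P \<Longrightarrow> a < b \<Longrightarrow> nx a \<le> b"
    using PV_bounds by (auto simp: next_pv_def)
qed

lemma next_pv_le: "a \<in> P \<Longrightarrow> nx a \<le> n + 1"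
  using next_pv_cases PV_bounds by fastforce

lemma not_PV_before_next_pv: "a \<in> P \<Longrightarrow> a < m \<Longrightarrow> m < nx a \<Longrightarrow> m \<notin> P"
  using next_pv_least by force

text \<open>The cell \<open>](c-1)/n, c/n[\<close> lies in the run from \<open>last_pv c\<close> to \<open>nx (last_pv c)\<close>.\<close>
definition last_pv :: "nat \<Rightarrow> nat" where
  "last_pv c = Max {a \<in> P. a \<le> c}"

lemma last_pv:
  assumes "1 \<le> c" "c \<le> n"
  shows last_pv_in_PV: "last_pv c \<in> P" and last_pv_le: "last_pv c \<le> c"
    and less_next_pv_last_pv: "c < nx (last_pv c)"
proof -
  let ?S = "{a \<in> P. a \<le> c}"
  have "finite ?S" "1 \<in> ?S" using finite_PV one_in_PV assms by auto
  then have S: "last_pv c \<in> ?S" "\<And>a. a \<in> ?S \<Longrightarrow> a \<le> last_pv c"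
    unfolding last_pv_def using Max_in Max_ge by blast+
  then show "last_pv c \<in> P" "last_pv c \<le> c" by auto
  show "c < nx (last_pv c)"
  proof (rule ccontr)
    assume "\<not> c < nx (last_pv c)"
    then have "nx (last_pv c) \<in> ?S" using next_pv_cases[of "last_pv c"] S assms by auto
    then show False using S next_pv_gt[of "last_pv c"] by fastforce
  qed
qed

lemma last_pv_eqI:
  assumes "a \<in> P" "a \<le> c" "c < nx a"
  shows "last_pv c = a"
proof -
  have c: "1 \<le> c" "c \<le> n" using assms PV_bounds next_pv_le[of a] by force+
  have "a \<le> last_pv c" unfolding last_pv_def using assms finite_PV by (auto intro: Max_ge)
  moreover have "\<not> a < last_pv c"
    using next_pv_least[OF assms(1) last_pv_in_PV[OF c]] last_pv_le[OF c] assms(3) by auto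
  ultimately show ?thesis by simp
qed

lemma last_pv_mono: "1 \<le> c \<Longrightarrow> c \<le> c' \<Longrightarrow> c' \<le> n \<Longrightarrow> last_pv c \<le> last_pv c'"
  using last_pv_in_PV[of c] last_pv_le[of c] finite_PV unfolding last_pv_def[of c'] by (intro Max_ge) auto

lemma not_descent_in_valley_run:
  assumes "is_valley D n a" "a \<le> m" "m < nx a" "m < n"
  shows "m \<notin> D"
  using assms(2-4)
proof (induction m rule: dec_induct)
  case base then show ?case using assms(1) by (auto simp: is_valley_def)
next
  case (step m)
  have "Suc m \<notin> P" using not_PV_before_next_pv[of a "Suc m"] assms(1) step by (auto simp: PV_def)
  then show ?case using step by (auto simp: PV_def is_peak_def)
qed

lemma descent_in_peak_run:
  assumes "is_peak D n a" "a \<le> m" "m < nx a" "m < n"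
  shows "m \<in> D"
  using assms(2-4)
proof (induction m rule: dec_induct)
  case base then show ?case using assms(1) by (auto simp: is_peak_def)
next
  case (step m)
  have "Suc m \<notin> P" using not_PV_before_next_pv[of a "Suc m"] assms(1) step by (auto simp: PV_def)
  then show ?case using step by (auto simp: PV_def is_valley_def)
qed

lemma slope_bounds:
  assumes "1 \<le> p" "p \<le> n"
  shows "1 \<le> slope_x D n p" "slope_x D n p \<le> p" "\<And>j. j \<in> {slope_x D n p..p} \<Longrightarrow> j \<in> P \<Longrightarrow> j = p"
    and "p \<le> slope_y D n p" "slope_y D n p \<le> n" "\<And>j. j \<in> {p..slope_y D n p} \<Longrightarrow> j \<in> P \<Longrightarrow> j = p"
proof -
  let ?X = "{x. 1 \<le> x \<and> x \<le> p \<and> (\<forall>j\<in>{x..p}. j \<in> P \<longrightarrow> j = p)}"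
  let ?Y = "{y. p \<le> y \<and> y \<le> n \<and> (\<forall>j\<in>{p..y}. j \<in> P \<longrightarrow> j = p)}"
  have "p \<in> ?X" "finite ?X" "p \<in> ?Y" "finite ?Y" using assms by auto
  then have "Min ?X \<in> ?X" "Max ?Y \<in> ?Y" using Min_in Max_in by blast+
  then show "1 \<le> slope_x D n p" "slope_x D n p \<le> p" "\<And>j. j \<in> {slope_x D n p..p} \<Longrightarrow> j \<in> P \<Longrightarrow> j = p"
    "p \<le> slope_y D n p" "slope_y D n p \<le> n" "\<And>j. j \<in> {p..slope_y D n p} \<Longrightarrow> j \<in> P \<Longrightarrow> j = p"
    unfolding slope_x_def slope_y_def by blast+
qed

lemma run_of_slope_cell:
  assumes "1 \<le> p" "p \<le> n" and "c \<in> {slope_x D n p..slope_y D n p}"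
  shows "1 \<le> c" "c \<le> n" "last_pv c \<le> p" "p \<le> nx (last_pv c)"
proof -
  note S = slope_bounds[OF assms(1,2)]
  show c: "1 \<le> c" "c \<le> n" using S assms(3) by auto
  note L = last_pv_in_PV[OF c] last_pv_le[OF c] less_next_pv_last_pv[OF c]
  show "last_pv c \<le> p"
    using S(6)[of "last_pv c"] L assms(3) by (cases "last_pv c \<le> p") auto
  show "p \<le> nx (last_pv c)"
    using S(3)[of "nx (last_pv c)"] next_pv_cases[OF L(1)] L assms by (cases "p \<le> nx (last_pv c)") auto
qed

lemma n_pos: "0 < real n" using two_le_n by simp

definition in_open_cell :: "nat \<Rightarrow> real \<Rightarrow> bool" where
  "in_open_cell c u \<longleftrightarrow> 1 \<le> c \<and> c \<le> n \<and> real c - 1 < real n * u \<and> real n * u < real c"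

definition run_interval :: "nat \<Rightarrow> real set" where
  "run_interval a = {(real a - 1) / real n <..< (real (nx a) - 1) / real n}"

lemma run_paintbox_eq:
  "run_paintbox lam n = (\<Union>a\<in>{a. is_valley D n a}. run_interval a, \<Union>a\<in>{a. is_peak D n a}. run_interval a)"
  by (simp add: run_paintbox_def run_interval_def Let_def)

lemma mem_run_interval_iff:
  "u \<in> run_interval a \<longleftrightarrow> real a - 1 < real n * u \<and> real n * u < real (nx a) - 1"
  using n_pos by (simp add: run_interval_def field_simps)

lemma mem_run_interval_iff_last_pv:
  assumes "in_open_cell c u" "a \<in> P"
  shows "u \<in> run_interval a \<longleftrightarrow> a = last_pv c"
proof -
  have c: "1 \<le> c" "c \<le> n" and u: "real c - 1 < real n * u" "real n * u < real c"
    using assms(1) by (auto simp: in_open_cell_def)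
  have "real a - 1 < real n * u \<longleftrightarrow> a \<le> c" using u by linarith
  moreover have "real n * u < real (nx a) - 1 \<longleftrightarrow> c < nx a" using u by linarith
  ultimately show ?thesis
    unfolding mem_run_interval_iff
    using last_pv_eqI[OF assms(2)] last_pv_le[OF c] less_next_pv_last_pv[OF c] by auto
qed

lemma grid_point_notin_run_interval:
  assumes "a \<in> P" "b \<in> P \<or> b = n + 1"
  shows "(real b - 1) / real n \<notin> run_interval a"
proof
  assume "(real b - 1) / real n \<in> run_interval a"
  then have "a < b" "b < nx a"
    using n_pos by (auto simp: mem_run_interval_iff)
  then show False using assms not_PV_before_next_pv[OF assms(1)] next_pv_le[OF assms(1)] by auto
qed

text \<open>The right end point of a run interval lies on the grid, hence in no run interval.\<close>
lemma run_intervals_separated: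
  assumes "a \<in> P" "b \<in> P" "a < b" "u \<in> run_interval a" "v \<in> run_interval b"
    and "connected T" "u \<in> T" "v \<in> T"
  shows "\<not> T \<subseteq> (\<Union>c\<in>P. run_interval c)"
proof
  assume T: "T \<subseteq> (\<Union>c\<in>P. run_interval c)"
  let ?t = "(real (nx a) - 1) / real n"
  have "u < ?t" using assms(4) by (simp add: run_interval_def)
  moreover have "?t \<le> (real b - 1) / real n"
    using next_pv_least[OF assms(1-3)] n_pos by (simp add: divide_right_mono)
  then have "?t < v" using assms(5) by (simp add: run_interval_def)
  ultimately have "?t \<in> T" using connected_contains_Ioo[OF assms(6-8)] by auto
  then show False
    using T grid_point_notin_run_interval next_pv_cases[OF assms(1)] by blast
qed

lemma same_comp_run_intervals_iff:
  assumes Q: "\<And>a. Q a \<Longrightarrow> a \<in> P" and u: "in_open_cell c u" and v: "in_open_cell c' v"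
  shows "same_comp (\<Union>a\<in>{a. Q a}. run_interval a) u v \<longleftrightarrow> last_pv c = last_pv c' \<and> Q (last_pv c)"
proof
  assume "same_comp (\<Union>a\<in>{a. Q a}. run_interval a) u v"
  then obtain T where T: "connected T" "T \<subseteq> (\<Union>a\<in>{a. Q a}. run_interval a)" "u \<in> T" "v \<in> T"
    by (auto simp: same_comp_def connected_component_def)
  obtain a b where ab: "Q a" "u \<in> run_interval a" "Q b" "v \<in> run_interval b" using T by blast
  have "T \<subseteq> (\<Union>c\<in>P. run_interval c)" using T Q by blast
  then have "\<not> a < b" "\<not> b < a"
    using run_intervals_separated[of a b u v T] run_intervals_separated[of b a v u T] ab Q T by auto
  then have "a = b" by simp
  then show "last_pv c = last_pv c' \<and> Q (last_pv c)"
    using mem_run_interval_iff_last_pv[OF u] mem_run_interval_iff_last_pv[OF v] ab Q by auto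
next
  assume h: "last_pv c = last_pv c' \<and> Q (last_pv c)"
  then have "u \<in> run_interval (last_pv c)" "v \<in> run_interval (last_pv c)"
    using mem_run_interval_iff_last_pv[OF u] mem_run_interval_iff_last_pv[OF v] Q by auto
  moreover have "run_interval (last_pv c) \<subseteq> (\<Union>a\<in>{a. Q a}. run_interval a)" using h by auto
  ultimately show "same_comp (\<Union>a\<in>{a. Q a}. run_interval a) u v"
    unfolding same_comp_def connected_component_def
    by (intro exI[of _ "run_interval (last_pv c)"]) (auto simp: run_interval_def)
qed

lemma cell_less_iff_last_pv_less:
  assumes "in_open_cell c u" "in_open_cell c' v" "last_pv c \<noteq> last_pv c'"
  shows "u < v \<longleftrightarrow> last_pv c < last_pv c'"
proof
  have c: "1 \<le> c" "c \<le> n" "real c - 1 < real n * u" "real n * u < real c"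
    and c': "1 \<le> c'" "c' \<le> n" "real c' - 1 < real n * v" "real n * v < real c'"
    using assms(1,2) by (auto simp: in_open_cell_def)
  {
    assume "u < v"
    then have "real n * u < real n * v" using n_pos by simp
    then have "c \<le> c'" using c c' by linarith
    then show "last_pv c < last_pv c'" using last_pv_mono[of c c'] c c' assms(3) by auto
  }
  assume "last_pv c < last_pv c'"
  then have "c < c'"
    using next_pv_least[OF last_pv_in_PV[OF c(1,2)] last_pv_in_PV[OF c'(1,2)]]
      less_next_pv_last_pv[OF c(1,2)] last_pv_le[OF c'(1,2)] by auto
  then have "real n * u < real n * v" using c c' by linarith
  then show "u < v" using n_pos by simp
qed

lemma less_iff_run_less:
  assumes "a \<in> P" "b \<in> P" "a \<noteq> b" "a \<le> p" "p \<le> nx a" "b \<le> q" "q \<le> nx b" "p \<noteq> q"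
  shows "p < q \<longleftrightarrow> a < b"
proof -
  have "a < b \<Longrightarrow> p < q" using next_pv_least[OF assms(1,2)] assms(5,6,8) by fastforce
  moreover have "b < a \<Longrightarrow> q < p" using next_pv_least[OF assms(2,1)] assms(4,7,8) by fastforce
  ultimately show ?thesis using assms(3) by linarith
qed

lemma finite_Omega: "finite (Omega n lam)"
proof (rule finite_subset)
  show "Omega n lam \<subseteq> {w. set w \<subseteq> {1..n} \<and> length w = n}"
    by (auto simp: Omega_def perm_word_def dest: distinct_card)
qed (rule finite_lists_length_eq, simp)

lemma block_word_in_Omega: "block_word lam \<in> Omega n lam"
  using perm_word_block_word[of lam] des_block_word[OF parts_pos] sum_parts by (simp add: Omega_def)

definition in_slope_cells :: "nat list \<Rightarrow> nat \<Rightarrow> (nat \<Rightarrow> real) \<Rightarrow> bool" where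
  "in_slope_cells w k x \<longleftrightarrow>
     (\<forall>i\<in>{1..k}. \<exists>c\<in>{slope_x D n (pos w i)..slope_y D n (pos w i)}. in_open_cell c (x i))"

context
  fixes w assumes w_in_Omega: "w \<in> Omega n lam"
begin

lemma word_props: "distinct w" "set w = {1..n}" "length w = n" "des w = D"
  using w_in_Omega by (auto simp: Omega_def perm_word_def dest: distinct_card)

lemma word_step_less_iff:
  assumes "1 \<le> m" "m < n"
  shows "w ! m < w ! (m - 1) \<longleftrightarrow> m \<in> D"
  using word_props(3,4) assms by (auto simp: des_def)

lemma word_step_neq:
  assumes "1 \<le> m" "m < n"
  shows "w ! m \<noteq> w ! (m - 1)"
  using word_props(1,3) assms by (auto simp: nth_eq_iff_index_eq)

lemma word_ascends_on_valley_run: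
  assumes "is_valley D n a"
  shows "monotone_on {a..min (nx a) n} (<) (<) (\<lambda>p. w ! (p - 1))"
proof (rule monotone_on_atLeastAtMost_SucI)
  fix m assume "a \<le> m" "m < min (nx a) n"
  moreover have "1 \<le> a" using assms by (auto simp: is_valley_def)
  ultimately show "w ! (m - 1) < w ! (Suc m - 1)"
    using not_descent_in_valley_run[OF assms] word_step_less_iff[of m] word_step_neq[of m] by auto
qed (auto simp: transp_def)

lemma word_descends_on_peak_run:
  assumes "is_peak D n a"
  shows "monotone_on {a..min (nx a) n} (<) (>) (\<lambda>p. w ! (p - 1))"
proof (rule monotone_on_atLeastAtMost_SucI)
  fix m assume "a \<le> m" "m < min (nx a) n"
  moreover have "1 \<le> a" using assms by (auto simp: is_peak_def)
  ultimately show "w ! (m - 1) > w ! (Suc m - 1)"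
    using descent_in_peak_run[OF assms] word_step_less_iff[of m] by auto
qed (auto simp: transp_def)

lemma pos_word_bounds: "i \<in> {1..n} \<Longrightarrow> 1 \<le> pos w i \<and> pos w i \<le> n"
  using pos_in_set[of w i] word_props by auto

lemma nth_pos_word: "i \<in> {1..n} \<Longrightarrow> w ! (pos w i - 1) = i"
  using pos_in_set[of w i] word_props by auto

lemma pb_before_run_paintbox_iff:
  assumes "k \<le> n" "in_slope_cells w k x" "i \<in> {1..k}" "j \<in> {1..k}"
  shows "pb_before (run_paintbox lam n) x i j \<longleftrightarrow> pos w i < pos w j"
proof (cases "i = j")
  case True
  then show ?thesis by (auto simp: pb_before_def)
next
  case False
  let ?p = "pos w i" and ?q = "pos w j"
  have ij: "i \<in> {1..n}" "j \<in> {1..n}" using assms(1,3,4) by auto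
  have p: "1 \<le> ?p" "?p \<le> n" and q: "1 \<le> ?q" "?q \<le> n"
    using pos_word_bounds[OF ij(1)] pos_word_bounds[OF ij(2)] by auto
  have "?p \<noteq> ?q" using nth_pos_word[OF ij(1)] nth_pos_word[OF ij(2)] False by metis
  obtain ci cj where ci: "ci \<in> {slope_x D n ?p..slope_y D n ?p}" "in_open_cell ci (x i)"
    and cj: "cj \<in> {slope_x D n ?q..slope_y D n ?q}" "in_open_cell cj (x j)"
    using assms(2-4) unfolding in_slope_cells_def by blast
  define a b where "a = last_pv ci" and "b = last_pv cj"
  have a: "a \<in> P" "a \<le> ?p" "?p \<le> nx a" and b: "b \<in> P" "b \<le> ?q" "?q \<le> nx b"
    using run_of_slope_cell[OF p ci(1)] run_of_slope_cell[OF q cj(1)] last_pv_in_PV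
    unfolding a_def b_def by auto
  have valley_comp: "same_comp (fst (run_paintbox lam n)) (x i) (x j) \<longleftrightarrow> a = b \<and> is_valley D n a"
    and peak_comp: "same_comp (snd (run_paintbox lam n)) (x i) (x j) \<longleftrightarrow> a = b \<and> is_peak D n a"
    unfolding run_paintbox_eq fst_conv snd_conv a_def b_def
    by (rule same_comp_run_intervals_iff[OF _ ci(2) cj(2)]; simp add: PV_def)+
  show ?thesis
  proof (cases "a = b")
    case True
    then have run: "?p \<in> {a..min (nx a) n}" "?q \<in> {a..min (nx a) n}" using a b p q by auto
    consider "is_valley D n a" | "is_peak D n a" using a(1) by (auto simp: PV_def)
    then show ?thesis
    proof cases
      case valley: 1
      have "i < j \<longleftrightarrow> ?p < ?q"
        using monotone_on_less_iff[OF word_ascends_on_valley_run[OF valley] _ run \<open>?p \<noteq> ?q\<close>]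
          nth_pos_word ij by (simp add: asymp_on_def)
      then show ?thesis
        using valley_comp peak_comp True valley not_peak_and_valley by (auto simp: pb_before_def)
    next
      case peak: 2
      have "j < i \<longleftrightarrow> ?p < ?q"
        using monotone_on_less_iff[OF word_descends_on_peak_run[OF peak] _ run \<open>?p \<noteq> ?q\<close>]
          nth_pos_word ij by (simp add: asymp_on_def)
      then show ?thesis
        using valley_comp peak_comp True peak not_peak_and_valley by (auto simp: pb_before_def)
    qed
  next
    case False
    have "x i < x j \<longleftrightarrow> a < b"
      using cell_less_iff_last_pv_less[OF ci(2) cj(2)] False unfolding a_def b_def by simp
    moreover have "?p < ?q \<longleftrightarrow> a < b"
      using less_iff_run_less[OF a(1) b(1) False a(2,3) b(2,3) \<open>?p \<noteq> ?q\<close>] .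
    ultimately show ?thesis
      using valley_comp peak_comp False by (auto simp: pb_before_def)
  qed
qed

lemma paintbox_run_paintbox_eq_restr:
  assumes "k \<le> n" "in_slope_cells w k x"
  shows "paintbox (run_paintbox lam n) k x = restr k w"
  unfolding paintbox_def
proof (rule the_equality)
  have w: "perm_word n w" using w_in_Omega by (simp add: Omega_def)
  show "perm_word k (restr k w) \<and> (\<forall>i\<in>{1..k}. \<forall>j\<in>{1..k}.
          pos (restr k w) i < pos (restr k w) j \<longleftrightarrow> pb_before (run_paintbox lam n) x i j)"
    using perm_word_restr[OF w assms(1)] pos_restr_less_iff[OF w assms(1)]
      pb_before_run_paintbox_iff[OF assms] by auto
  then show "w' = restr k w"
    if "perm_word k w' \<and> (\<forall>i\<in>{1..k}. \<forall>j\<in>{1..k}.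
          pos w' i < pos w' j \<longleftrightarrow> pb_before (run_paintbox lam n) x i j)" for w'
    using that by (intro perm_word_eq_if_same_order) auto
qed

end

context
  fixes w k assumes w_in_Omega: "w \<in> Omega n lam" and k_le_n: "k \<le> n"
begin

definition xi_lower :: "nat \<Rightarrow> real" where
  "xi_lower i = (real (slope_x D n (pos w i)) - 1) / real n"

definition xi_upper :: "nat \<Rightarrow> real" where
  "xi_upper i = real (slope_y D n (pos w i)) / real n"

lemma xi_measure_eq:
  "xi_measure n lam w k = PiM {1..k} (\<lambda>i. uniform_measure lborel {xi_lower i..xi_upper i})"
  by (simp add: xi_measure_def xi_lower_def xi_upper_def)

lemma prob_space_uniform_xi:
  assumes "i \<in> {1..k}"
  shows "prob_space (uniform_measure lborel {xi_lower i..xi_upper i})"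
proof -
  have "1 \<le> pos w i" "pos w i \<le> n" using pos_word_bounds[OF w_in_Omega] assms k_le_n by auto
  then have "real (slope_x D n (pos w i)) - 1 < real (slope_y D n (pos w i))"
    using slope_bounds(2,4) by fastforce
  then have "xi_lower i < xi_upper i"
    unfolding xi_lower_def xi_upper_def using n_pos by (rule divide_strict_right_mono)
  then show ?thesis by (intro prob_space_uniform_measure) auto
qed

lemma prob_space_xi_measure: "prob_space (xi_measure n lam w k)"
  unfolding xi_measure_eq by (rule prob_space_PiM) (rule prob_space_uniform_xi)

text \<open>Off the finite grid \<open>{m / n}\<close> (a null set) each \<open>\<xi>\<^sub>i\<close> lies in an open cell of its slope.\<close>
lemma AE_in_slope_cells: "AE x in xi_measure n lam w k. in_slope_cells w k x"
proof -
  have off_grid: "AE y in lborel. y \<notin> (\<lambda>m. real m / real n) ` {0..n}"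
    by (rule AE_discrete_difference) (simp_all add: countable_finite)
  have "AE x in xi_measure n lam w k.
      \<exists>c\<in>{slope_x D n (pos w i)..slope_y D n (pos w i)}. in_open_cell c (x i)"
    if i: "i \<in> {1..k}" for i
  proof -
    have p: "1 \<le> pos w i" "pos w i \<le> n" using pos_word_bounds[OF w_in_Omega] i k_le_n by auto
    have "AE y in uniform_measure lborel {xi_lower i..xi_upper i}.
        \<exists>c\<in>{slope_x D n (pos w i)..slope_y D n (pos w i)}. in_open_cell c y"
    proof (rule AE_uniform_measureI)
      show "AE y in lborel. y \<in> {xi_lower i..xi_upper i} \<longrightarrow>
          (\<exists>c\<in>{slope_x D n (pos w i)..slope_y D n (pos w i)}. in_open_cell c y)"
        using off_grid
      proof (rule eventually_mono, intro impI)
        fix y assume "y \<notin> (\<lambda>m. real m / real n) ` {0..n}" "y \<in> {xi_lower i..xi_upper i}"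
        then show "\<exists>c\<in>{slope_x D n (pos w i)..slope_y D n (pos w i)}. in_open_cell c y"
          using exists_open_cell_off_grid[where n=n and y=y and s="slope_x D n (pos w i)"
              and t="slope_y D n (pos w i)"] slope_bounds[OF p] two_le_n
          unfolding xi_lower_def xi_upper_def in_open_cell_def by fastforce
      qed
    qed simp
    from AE_PiM_component[where M = "\<lambda>i. uniform_measure lborel {xi_lower i..xi_upper i}",
        OF prob_space_uniform_xi i this]
    show ?thesis
      unfolding xi_measure_eq .
  qed
  then show ?thesis
    unfolding in_slope_cells_def by (subst AE_finite_all) auto
qed

lemma AE_paintbox_eq_restr:
  "AE x in xi_measure n lam w k. paintbox (run_paintbox lam n) k x = restr k w"
  using AE_in_slope_cells
  by (rule eventually_mono) (rule paintbox_run_paintbox_eq_restr[OF w_in_Omega k_le_n])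

lemma sets_paintbox_xi:
  "{x \<in> space (xi_measure n lam w k). paintbox (run_paintbox lam n) k x = \<tau>} \<in> sets (xi_measure n lam w k)"
proof (rule sets_paintbox_eq)
  show "open (fst (run_paintbox lam n))" "open (snd (run_paintbox lam n))"
    unfolding run_paintbox_eq run_interval_def by auto
  show "(\<lambda>x. x i) \<in> borel_measurable (xi_measure n lam w k)" if "i \<in> {1..k}" for i
    using measurable_component_singleton[OF that, of "\<lambda>i. uniform_measure lborel {xi_lower i..xi_upper i}"]
    unfolding xi_measure_eq by (simp cong: measurable_cong_sets)
qed

lemma measure_paintbox_eq:
  "measure (xi_measure n lam w k)
     {x \<in> space (xi_measure n lam w k). paintbox (run_paintbox lam n) k x = \<tau>}
   = (if restr k w = \<tau> then 1 else 0)"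
proof -
  interpret prob_space "xi_measure n lam w k" by (rule prob_space_xi_measure)
  show ?thesis
  proof (cases "restr k w = \<tau>")
    case True
    then have "AE x in xi_measure n lam w k. paintbox (run_paintbox lam n) k x = \<tau>"
      using AE_paintbox_eq_restr by simp
    then show ?thesis using True prob_eq_1[OF sets_paintbox_xi] by (auto intro: eventually_mono)
  next
    case False
    then have "AE x in xi_measure n lam w k. paintbox (run_paintbox lam n) k x \<noteq> \<tau>"
      using AE_paintbox_eq_restr by (auto elim: eventually_mono)
    then show ?thesis using False by (simp add: prob_eq_0_AE)
  qed
qed

end

end

theorem proposition12:
  fixes lam :: "nat list" and n k :: nat
  assumes "\<forall>p\<in>set lam. 0 < p" and "sum_list lam = n" and "2 \<le> n"
    and "1 \<le> k" and "k \<le> n"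
  shows "(\<forall>w\<in>Omega n lam.
            AE x in xi_measure n lam w k. paintbox (run_paintbox lam n) k x = restr k w)
       \<and> (\<forall>\<tau>. measure_pmf.prob (pmf_of_set (Omega n lam)) {w. restr k w = \<tau>}
              = (\<Sum>w\<in>Omega n lam.
                   measure (xi_measure n lam w k)
                     {x \<in> space (xi_measure n lam w k).
                        paintbox (run_paintbox lam n) k x = \<tau>}) / real (card (Omega n lam)))"
proof -
  interpret composition lam n using assms(1-3) by unfold_locales
  have "Omega n lam \<noteq> {}" using block_word_in_Omega by blast
  moreover have "(\<Sum>w\<in>Omega n lam. measure (xi_measure n lam w k)
        {x \<in> space (xi_measure n lam w k). paintbox (run_paintbox lam n) k x = \<tau>})
      = real (card (Omega n lam \<inter> {w. restr k w = \<tau>}))" for \<tau>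
    using measure_paintbox_eq[OF _ assms(5)] finite_Omega by (simp add: sum.If_cases Int_def)
  ultimately show ?thesis
    using AE_paintbox_eq_restr[OF _ assms(5)] finite_Omega by (simp add: measure_pmf_of_set)
qed

end
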